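(* The $(T,* )$-ideal $I(G,* )$ is generated, as a $(T,* )$-ideal, by its elements of the form $$f=\sum_{\alpha\in W_n} a_\alpha\,\alpha\big(x_{1,\sigma_1}x_{2,\sigma_2}\cdots x_{n,\sigma_n}\big),$$ where $n\ge 1$, $\sigma_1,\dots,\sigma_n\in G$ and $a_\alpha\in\mathbb{Q}$.
   Context: Let $G=\{g_1=e,g_2,\dots,g_k\}$ be a finite group of order $k$. Index the rows and columns of $k\times k$ complex matrices by $G$, let $E_{a,b}$ ($a,b\in G$) be the matrix units, and for $g\in G$ let $P_g=\sum_{h\in G}E_{h,hg}$. The $G$-crossed-product grading on $M_k(\mathbb{C})$ is $M_k(\mathbb{C})=\bigoplus_{g\in G}M_k(\mathbb{C})_g$ with $M_k(\mathbb{C})_g=\{DP_g: D \text{ diagonal}\}$. The involution $*$ on $M_k(\mathbb{C})$ is the transpose. Let $F=\mathbb{Q}\{x_{i,g},x_{i,g}^*: i\ge1, g\in G\}$ be the free associative $\mathbb{Q}$-algebra on these symbols, with the involution $*$ (the $\mathbb{Q}$-linear anti-automorphism of order 2 exchanging $x_{i,g}$ and $x_{i,g}^*$) and the $G$-grading $\deg x_{i,g}=g$, $\deg x_{i,g}^*=g^{-1}$. A graded $*$-identity is an $f\in F$ that vanishes under every substitution $x_{i,g}\mapsto A_{i,g}$, $x^*_{i,g}\mapsto A_{i,g}^{T}$ with $A_{i,g}\in M_k(\mathbb{C})_g$; $I(G,* )$ denotes the set of all graded $*$-identities. A $(T,* )$-ideal is an ideal of $F$ stable under $*$ and under every algebra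 endomorphism $\varphi$ of $F$ such that $\varphi(x_{i,g})$ is homogeneous of degree $g$ and $\varphi(x^*_{i,g})=\varphi(x_{i,g})^*$ for all $i,g$. Let $W_n=S_n\times C_2^n$ with $C_2=\{1,-1\}$. For $\alpha=(\pi,\gamma)$, $\gamma=(\gamma_1,\dots,\gamma_n)$, and a monomial $m=x_{i_1,\sigma_{i_1}}^{\epsilon_{i_1}}\cdots x_{i_n,\sigma_{i_n}}^{\epsilon_{i_n}}$ with $\{i_1,\dots,i_n\}=\{1,\dots,n\}$ and each $\epsilon_j\in\{\text{nothing},*\}$, define $\alpha(m)=x_{\pi(i_1),\sigma_{\pi(i_1)}}^{\delta_{\pi(i_1)}}\cdots x_{\pi(i_n),\sigma_{\pi(i_n)}}^{\delta_{\pi(i_n)}}$, where $\delta_j=\epsilon_j$ if $\gamma_j=1$ and $\delta_j$ is the other element of $\{\text{nothing},*\}$ if $\gamma_j=-1$. *)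

theory Defs
  imports "HOL-Algebra.Group" "HOL-Library.Poly_Mapping" "HOL-Combinatorics.Permutations" Complex_Main
begin

(* A letter (i, g, b) stands for x_{i,g} if b = False and for x_{i,g}^* if b = True. *)
type_synonym 'g letter = "nat \<times> 'g \<times> bool"

(* Elements of the free associative Q-algebra: finitely supported Q-combinations of words. *)
type_synonym 'g ncpoly = "'g letter list \<Rightarrow>\<^sub>0 rat"

definition letter_ok :: "('g, 'm) monoid_scheme \<Rightarrow> 'g letter \<Rightarrow> bool" where
  "letter_ok G l = (1 \<le> fst l \<and> fst (snd l) \<in> carrier G)"

(* the underlying set of F = Q{x_{i,g}, x_{i,g}^* : i >= 1, g in G} *)
definition FA :: "('g, 'm) monoid_scheme \<Rightarrow> 'g ncpoly set" where
  "FA G = {p. \<forall>w\<in>Poly_Mapping.keys p. \<forall>l\<in>set w. letter_ok G l}"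

definition ncmono :: "'g letter list \<Rightarrow> 'g ncpoly" where
  "ncmono w = Poly_Mapping.single w 1"

definition pmul :: "'g ncpoly \<Rightarrow> 'g ncpoly \<Rightarrow> 'g ncpoly" where
  "pmul p q = (\<Sum>u\<in>Poly_Mapping.keys p. \<Sum>v\<in>Poly_Mapping.keys q. Poly_Mapping.single (u @ v) (Poly_Mapping.lookup p u * Poly_Mapping.lookup q v))"

definition smult :: "rat \<Rightarrow> 'g ncpoly \<Rightarrow> 'g ncpoly" where
  "smult c p = pmul (Poly_Mapping.single [] c) p"

definition lstar :: "'g letter \<Rightarrow> 'g letter" where
  "lstar l = (fst l, fst (snd l), \<not> snd (snd l))"

definition wstar :: "'g letter list \<Rightarrow> 'g letter list" where
  "wstar w = rev (map lstar w)"

definition pstar :: "'g ncpoly \<Rightarrow> 'g ncpoly" where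
  "pstar p = (\<Sum>w\<in>Poly_Mapping.keys p. Poly_Mapping.single (wstar w) (Poly_Mapping.lookup p w))"

definition ldeg :: "('g, 'm) monoid_scheme \<Rightarrow> 'g letter \<Rightarrow> 'g" where
  "ldeg G l = (if snd (snd l) then inv\<^bsub>G\<^esub> (fst (snd l)) else fst (snd l))"

definition wdeg :: "('g, 'm) monoid_scheme \<Rightarrow> 'g letter list \<Rightarrow> 'g" where
  "wdeg G w = foldr (\<lambda>l h. ldeg G l \<otimes>\<^bsub>G\<^esub> h) w \<one>\<^bsub>G\<^esub>"

definition homogeneous :: "('g, 'm) monoid_scheme \<Rightarrow> 'g \<Rightarrow> 'g ncpoly \<Rightarrow> bool" where
  "homogeneous G h p = (\<forall>w\<in>Poly_Mapping.keys p. wdeg G w = h)"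

type_synonym 'g mat = "'g \<Rightarrow> 'g \<Rightarrow> complex"

definition mmul :: "('g, 'm) monoid_scheme \<Rightarrow> 'g mat \<Rightarrow> 'g mat \<Rightarrow> 'g mat" where
  "mmul G A B = (\<lambda>a c. \<Sum>b\<in>carrier G. A a b * B b c)"

definition mone :: "'g mat" where
  "mone = (\<lambda>a c. if a = c then 1 else 0)"

definition mtrans :: "'g mat \<Rightarrow> 'g mat" where
  "mtrans A = (\<lambda>a c. A c a)"

(* the homogeneous component M_k(C)_g = {D P_g : D diagonal}, P_g = sum_h E_{h,hg}:
   a matrix lies in it iff its only possibly nonzero entries are at positions (a, a g) *)
definition graded_comp :: "('g, 'm) monoid_scheme \<Rightarrow> 'g \<Rightarrow> 'g mat \<Rightarrow> bool" where
  "graded_comp G g A = (\<forall>a\<in>carrier G. \<forall>c\<in>carrier G. c \<noteq> a \<otimes>\<^bsub>G\<^esub> g \<longrightarrow> A a c = 0)"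

definition leval :: "(nat \<Rightarrow> 'g \<Rightarrow> 'g mat) \<Rightarrow> 'g letter \<Rightarrow> 'g mat" where
  "leval A l = (if snd (snd l) then mtrans (A (fst l) (fst (snd l))) else A (fst l) (fst (snd l)))"

definition weval :: "('g, 'm) monoid_scheme \<Rightarrow> (nat \<Rightarrow> 'g \<Rightarrow> 'g mat) \<Rightarrow> 'g letter list \<Rightarrow> 'g mat" where
  "weval G A w = foldr (\<lambda>l M. mmul G (leval A l) M) w mone"

definition peval :: "('g, 'm) monoid_scheme \<Rightarrow> (nat \<Rightarrow> 'g \<Rightarrow> 'g mat) \<Rightarrow> 'g ncpoly \<Rightarrow> 'g mat" where
  "peval G A p = (\<lambda>a c. \<Sum>w\<in>Poly_Mapping.keys p. of_rat (Poly_Mapping.lookup p w) * weval G A w a c)"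

definition graded_subst :: "('g, 'm) monoid_scheme \<Rightarrow> (nat \<Rightarrow> 'g \<Rightarrow> 'g mat) \<Rightarrow> bool" where
  "graded_subst G A = (\<forall>i g. 1 \<le> i \<longrightarrow> g \<in> carrier G \<longrightarrow> graded_comp G g (A i g))"

definition graded_star_ids :: "('g, 'm) monoid_scheme \<Rightarrow> 'g ncpoly set" where
  "graded_star_ids G = {f \<in> FA G. \<forall>A. graded_subst G A \<longrightarrow>
       (\<forall>a\<in>carrier G. \<forall>c\<in>carrier G. peval G A f a c = 0)}"

(* graded *-endomorphisms of F: determined by x_{i,g} |-> s i g (homogeneous of degree g),
   x_{i,g}^* |-> (s i g)^* *)
definition endo_data :: "('g, 'm) monoid_scheme \<Rightarrow> (nat \<Rightarrow> 'g \<Rightarrow> 'g ncpoly) \<Rightarrow> bool" where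
  "endo_data G s = (\<forall>i g. 1 \<le> i \<longrightarrow> g \<in> carrier G \<longrightarrow> s i g \<in> FA G \<and> homogeneous G g (s i g))"

definition lsubst :: "(nat \<Rightarrow> 'g \<Rightarrow> 'g ncpoly) \<Rightarrow> 'g letter \<Rightarrow> 'g ncpoly" where
  "lsubst s l = (if snd (snd l) then pstar (s (fst l) (fst (snd l))) else s (fst l) (fst (snd l)))"

definition wsubst :: "(nat \<Rightarrow> 'g \<Rightarrow> 'g ncpoly) \<Rightarrow> 'g letter list \<Rightarrow> 'g ncpoly" where
  "wsubst s w = foldr (\<lambda>l q. pmul (lsubst s l) q) w (ncmono [])"

definition psubst :: "(nat \<Rightarrow> 'g \<Rightarrow> 'g ncpoly) \<Rightarrow> 'g ncpoly \<Rightarrow> 'g ncpoly" where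
  "psubst s p = (\<Sum>w\<in>Poly_Mapping.keys p. smult (Poly_Mapping.lookup p w) (wsubst s w))"

definition tstar_ideal :: "('g, 'm) monoid_scheme \<Rightarrow> 'g ncpoly set \<Rightarrow> bool" where
  "tstar_ideal G I =
     (I \<subseteq> FA G \<and> 0 \<in> I \<and>
      (\<forall>p\<in>I. \<forall>q\<in>I. p + q \<in> I) \<and>
      (\<forall>p\<in>I. - p \<in> I) \<and>
      (\<forall>p\<in>I. \<forall>q\<in>FA G. pmul q p \<in> I \<and> pmul p q \<in> I) \<and>
      (\<forall>p\<in>I. pstar p \<in> I) \<and>
      (\<forall>s. endo_data G s \<longrightarrow> (\<forall>p\<in>I. psubst s p \<in> I)))"

definition tstar_hull :: "('g, 'm) monoid_scheme \<Rightarrow> 'g ncpoly set \<Rightarrow> 'g ncpoly set" where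
  "tstar_hull G S = \<Inter>{I. tstar_ideal G I \<and> S \<subseteq> I}"

(* alpha(x_{1,sigma_1} ... x_{n,sigma_n}) for alpha = (pi, gamma) in W_n = S_n x C_2^n;
   gamma j = True encodes gamma_j = -1 *)
definition Wact_mono :: "nat \<Rightarrow> (nat \<Rightarrow> 'g) \<Rightarrow> (nat \<Rightarrow> nat) \<Rightarrow> (nat \<Rightarrow> bool) \<Rightarrow> 'g letter list" where
  "Wact_mono n \<sigma> \<pi> \<gamma> = map (\<lambda>j. (\<pi> j, \<sigma> (\<pi> j), \<gamma> (\<pi> j))) [1..<Suc n]"

definition Wsum :: "nat \<Rightarrow> (nat \<Rightarrow> 'g) \<Rightarrow> ((nat \<Rightarrow> nat) \<Rightarrow> (nat \<Rightarrow> bool) \<Rightarrow> rat) \<Rightarrow> 'g ncpoly" where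
  "Wsum n \<sigma> a = (\<Sum>\<pi>\<in>{\<pi>. \<pi> permutes {1..n}}. \<Sum>\<gamma>\<in>{\<gamma>. \<forall>j. \<gamma> j \<longrightarrow> j \<in> {1..n}}.
                    smult (a \<pi> \<gamma>) (ncmono (Wact_mono n \<sigma> \<pi> \<gamma>)))"

end

theory Submission
  imports Defs
begin

text \<open>Graded \<open>*\<close>-identities form a \<open>(T,*)\<close>-ideal, because graded substitutions commute with
  evaluation at graded matrices and the involution becomes the transpose. Conversely, since \<open>\<rat>\<close> is
  infinite, rescaling one variable splits an identity into multihomogeneous components lying in the
  \<open>(T,*)\<close>-ideal it generates. A component of degree \<open>d \<ge> 2\<close> in some variable is \<open>1/d\<close> times the
  image of its partial linearization in a fresh variable, and the linearization has more distinct
  variables at the same total degree; so one arrives at multilinear identities. A multilinear identity,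
  with its variables renamed to \<open>x\<^sub>1,\<dots>,x\<^sub>n\<close>, is a combination of the monomials
  \<open>\<alpha>(x_{1,\<sigma>_1} \<cdots> x_{n,\<sigma>_n})\<close>.\<close>

abbreviation coeff :: "'g ncpoly \<Rightarrow> 'g letter list \<Rightarrow> rat" where
  "coeff \<equiv> Poly_Mapping.lookup"

abbreviation words :: "'g ncpoly \<Rightarrow> 'g letter list set" where
  "words \<equiv> Poly_Mapping.keys"

abbreviation monom :: "'g letter list \<Rightarrow> rat \<Rightarrow> 'g ncpoly" where
  "monom \<equiv> Poly_Mapping.single"

section \<open>The free algebra with involution\<close>

lemma coeff_monom: "coeff (monom u c) w = (if u = w then c else 0)"
  by (simp add: lookup_single when_def)

lemma monom_expansion: "p = (\<Sum>u\<in>words p. monom u (coeff p u))"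
  by (rule poly_mapping_eqI) (auto simp: lookup_sum coeff_monom in_keys_iff)

lemma sum_words_superset:
  assumes "finite U" "words p \<subseteq> U" "\<And>w. F w 0 = 0"
  shows "(\<Sum>w\<in>words p. F w (coeff p w)) = (\<Sum>w\<in>U. F w (coeff p w))"
  by (rule sum.mono_neutral_left) (use assms in \<open>auto simp: in_keys_iff\<close>)

lemma monom_expansion_superset: "finite U \<Longrightarrow> words p \<subseteq> U \<Longrightarrow> p = (\<Sum>u\<in>U. monom u (coeff p u))"
  by (subst monom_expansion) (rule sum_words_superset, auto)

lemma pmul_superset:
  assumes "finite U" "words p \<subseteq> U" "finite V" "words q \<subseteq> V"
  shows "pmul p q = (\<Sum>u\<in>U. \<Sum>v\<in>V. monom (u @ v) (coeff p u * coeff q v))"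
proof -
  have "pmul p q = (\<Sum>u\<in>words p. \<Sum>v\<in>V. monom (u @ v) (coeff p u * coeff q v))"
    unfolding pmul_def
    by (rule sum.cong[OF refl], rule sum.mono_neutral_left) (use assms in \<open>auto simp: in_keys_iff\<close>)
  also have "\<dots> = (\<Sum>u\<in>U. \<Sum>v\<in>V. monom (u @ v) (coeff p u * coeff q v))"
    by (rule sum_words_superset) (use assms in auto)
  finally show ?thesis .
qed

lemma pmul_add_left: "pmul (p + q) r = pmul p r + pmul q r"
  using keys_add[of p q]
  by (simp add: pmul_superset[of "words p \<union> words q" _ "words r"] lookup_add distrib_right
      single_add sum.distrib)

lemma pmul_add_right: "pmul r (p + q) = pmul r p + pmul r q"
  using keys_add[of p q]
  by (simp add: pmul_superset[of "words r" _ "words p \<union> words q"] lookup_add distrib_left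
      single_add sum.distrib)

lemma pmul_zero_left [simp]: "pmul 0 q = 0"
  and pmul_zero_right [simp]: "pmul q 0 = 0"
  by (simp_all add: pmul_def)

lemma pmul_sum_left: "pmul (\<Sum>i\<in>A. f i) q = (\<Sum>i\<in>A. pmul (f i) q)"
  by (induction A rule: infinite_finite_induct) (auto simp: pmul_add_left)

lemma pmul_sum_right: "pmul q (\<Sum>i\<in>A. f i) = (\<Sum>i\<in>A. pmul q (f i))"
  by (induction A rule: infinite_finite_induct) (auto simp: pmul_add_right)

lemma pmul_monom: "pmul (monom u a) (monom v b) = monom (u @ v) (a * b)"
  by (subst pmul_superset[of "{u}" _ "{v}"]) auto

lemma pmul_monom_left: "pmul (monom u c) r = (\<Sum>w\<in>words r. monom (u @ w) (c * coeff r w))"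
  by (subst pmul_superset[of "{u}" _ "words r"]) auto

lemma pmul_monom_right: "pmul p (monom u c) = (\<Sum>w\<in>words p. monom (w @ u) (coeff p w * c))"
  by (subst pmul_superset[of "words p" _ "{u}"]) auto

lemma pmul_assoc: "pmul (pmul p q) r = pmul p (pmul q r)"
proof -
  have "pmul (pmul p q) r =
      (\<Sum>u\<in>words p. \<Sum>v\<in>words q. \<Sum>w\<in>words r. monom (u @ v @ w) (coeff p u * coeff q v * coeff r w))"
    by (simp add: pmul_def[of p q] pmul_sum_left pmul_monom_left)
  also have "\<dots> =
      (\<Sum>v\<in>words q. \<Sum>w\<in>words r. \<Sum>u\<in>words p. monom (u @ v @ w) (coeff p u * (coeff q v * coeff r w)))"
    by (subst sum.swap, rule sum.cong[OF refl], subst sum.swap) (simp add: mult.assoc)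
  also have "\<dots> = pmul p (pmul q r)"
    by (simp add: pmul_def[of q r] pmul_sum_right pmul_monom_right)
  finally show ?thesis .
qed

lemma pmul_one_left [simp]: "pmul (ncmono []) p = p"
  unfolding ncmono_def by (subst (1 2) monom_expansion) (simp add: pmul_sum_right pmul_monom)

lemma pmul_one_right [simp]: "pmul p (ncmono []) = p"
  unfolding ncmono_def by (subst (1 2) monom_expansion) (simp add: pmul_sum_left pmul_monom)

lemma pmul_ncmono: "pmul (ncmono u) (ncmono w) = ncmono (u @ w)"
  by (simp add: ncmono_def pmul_monom)

lemma coeff_smult [simp]: "coeff (smult c p) w = c * coeff p w"
proof -
  have "smult c p = (\<Sum>v\<in>words p. monom v (c * coeff p v))"
    unfolding smult_def by (subst pmul_superset[of "{[]}" _ "words p"]) auto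
  then show ?thesis
    by (auto simp: lookup_sum coeff_monom in_keys_iff)
qed

lemma smult_monom [simp]: "smult c (monom w a) = monom w (c * a)"
  by (rule poly_mapping_eqI) (simp add: coeff_monom)

lemma smult_add: "smult c (p + q) = smult c p + smult c q"
  and smult_add_left: "smult (c + d) p = smult c p + smult d p"
  by (rule poly_mapping_eqI, simp add: lookup_add algebra_simps)+

lemma smult_smult [simp]: "smult c (smult d p) = smult (c * d) p"
  and smult_one [simp]: "smult 1 p = p"
  and smult_zero [simp]: "smult 0 p = 0" "smult c 0 = 0"
  by (rule poly_mapping_eqI, simp)+

lemma smult_sum: "smult c (\<Sum>i\<in>A. f i) = (\<Sum>i\<in>A. smult c (f i))"
  by (induction A rule: infinite_finite_induct) (auto simp: smult_add)

lemma words_smult: "words (smult c p) \<subseteq> words p"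
  by (auto simp: in_keys_iff)

lemma pmul_smult_left: "pmul (smult c p) q = smult c (pmul p q)"
  by (simp add: smult_def pmul_assoc)

lemma pmul_smult_right: "pmul p (smult c q) = smult c (pmul p q)"
proof -
  have "pmul p (smult c q) = (\<Sum>u\<in>words p. \<Sum>v\<in>words q. monom (u @ v) (coeff p u * (c * coeff q v)))"
    using pmul_superset[of "words p" p "words q" "smult c q"] by (simp add: words_smult)
  then show ?thesis
    by (simp add: pmul_def smult_sum mult.left_commute)
qed

lemma pstar_superset: "finite U \<Longrightarrow> words p \<subseteq> U \<Longrightarrow> pstar p = (\<Sum>w\<in>U. monom (wstar w) (coeff p w))"
  unfolding pstar_def by (rule sum_words_superset) auto

lemma pstar_add: "pstar (p + q) = pstar p + pstar q"
  using keys_add[of p q]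
  by (simp add: pstar_superset[of "words p \<union> words q"] lookup_add single_add sum.distrib)

lemma pstar_zero [simp]: "pstar 0 = 0"
  by (simp add: pstar_def)

lemma pstar_sum: "pstar (\<Sum>i\<in>A. f i) = (\<Sum>i\<in>A. pstar (f i))"
  by (induction A rule: infinite_finite_induct) (auto simp: pstar_add)

lemma pstar_monom [simp]: "pstar (monom w c) = monom (wstar w) c"
  by (subst pstar_superset[of "{w}"]) auto

lemma pstar_smult: "pstar (smult c p) = smult c (pstar p)"
  by (subst (1 2) monom_expansion) (simp add: pstar_sum smult_sum)

lemma wsubst_Nil [simp]: "wsubst s [] = ncmono []"
  and wsubst_Cons [simp]: "wsubst s (l # w) = pmul (lsubst s l) (wsubst s w)"
  by (simp_all add: wsubst_def)

lemma wsubst_append: "wsubst s (u @ v) = pmul (wsubst s u) (wsubst s v)"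
  by (induction u) (simp_all add: pmul_assoc)

lemma wsubst_letterwise:
  "(\<And>l. lsubst s l = ncmono [h l]) \<Longrightarrow> wsubst s w = ncmono (map h w)"
  by (induction w) (auto simp: pmul_ncmono)

lemma psubst_superset:
  "finite U \<Longrightarrow> words p \<subseteq> U \<Longrightarrow> psubst s p = (\<Sum>w\<in>U. smult (coeff p w) (wsubst s w))"
  unfolding psubst_def by (rule sum_words_superset) auto

lemma psubst_add: "psubst s (p + q) = psubst s p + psubst s q"
  using keys_add[of p q]
  by (simp add: psubst_superset[of "words p \<union> words q"] lookup_add smult_add_left sum.distrib)

lemma psubst_zero [simp]: "psubst s 0 = 0"
  by (simp add: psubst_def)

lemma psubst_sum: "psubst s (\<Sum>i\<in>A. f i) = (\<Sum>i\<in>A. psubst s (f i))"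
  by (induction A rule: infinite_finite_induct) (auto simp: psubst_add)

lemma psubst_monom [simp]: "psubst s (monom w c) = smult c (wsubst s w)"
  by (subst psubst_superset[of "{w}"]) auto

lemma psubst_ncmono [simp]: "psubst s (ncmono w) = wsubst s w"
  by (simp add: ncmono_def)

lemma psubst_smult: "psubst s (smult c p) = smult c (psubst s p)"
  by (subst (1 2) monom_expansion) (simp add: psubst_sum smult_sum)

lemma psubst_pmul: "psubst s (pmul p q) = pmul (psubst s p) (psubst s q)"
proof -
  have "psubst s (pmul p q) =
      (\<Sum>u\<in>words p. \<Sum>v\<in>words q. smult (coeff p u * coeff q v) (wsubst s (u @ v)))"
    by (simp add: pmul_def psubst_sum)
  also have "\<dots> = (\<Sum>u\<in>words p. \<Sum>v\<in>words q.
      pmul (smult (coeff p u) (wsubst s u)) (smult (coeff q v) (wsubst s v)))"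
    by (simp add: wsubst_append pmul_smult_left pmul_smult_right mult.commute)
  also have "\<dots> = pmul (psubst s p) (psubst s q)"
    by (simp add: psubst_def pmul_sum_left pmul_sum_right) (rule sum.swap)
  finally show ?thesis .
qed

lemma psubst_letterwise:
  "(\<And>l. lsubst s l = ncmono [h l]) \<Longrightarrow> psubst s f = (\<Sum>w\<in>words f. monom (map h w) (coeff f w))"
  by (simp add: psubst_def wsubst_letterwise ncmono_def)

lemma FA_iff: "p \<in> FA G \<longleftrightarrow> (\<forall>w\<in>words p. \<forall>l\<in>set w. letter_ok G l)"
  by (simp add: FA_def)

lemma FA_monom: "\<forall>l\<in>set w. letter_ok G l \<Longrightarrow> monom w c \<in> FA G"
  by (simp add: FA_iff)

lemma FA_ncmono: "\<forall>l\<in>set w. letter_ok G l \<Longrightarrow> ncmono w \<in> FA G"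
  by (simp add: ncmono_def FA_monom)

lemma FA_zero [simp]: "0 \<in> FA G"
  by (simp add: FA_iff)

lemma FA_add: "p \<in> FA G \<Longrightarrow> q \<in> FA G \<Longrightarrow> p + q \<in> FA G"
  using keys_add[of p q] by (auto simp: FA_iff)

lemma FA_uminus: "p \<in> FA G \<Longrightarrow> - p \<in> FA G"
  by (auto simp: FA_iff)

lemma FA_sum: "(\<And>i. i \<in> A \<Longrightarrow> f i \<in> FA G) \<Longrightarrow> (\<Sum>i\<in>A. f i) \<in> FA G"
  by (induction A rule: infinite_finite_induct) (auto simp: FA_add)

lemma FA_smult: "p \<in> FA G \<Longrightarrow> smult c p \<in> FA G"
  using words_smult[of c p] by (auto simp: FA_iff)

lemma FA_pmul: "p \<in> FA G \<Longrightarrow> q \<in> FA G \<Longrightarrow> pmul p q \<in> FA G"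
  unfolding pmul_def by (intro FA_sum FA_monom) (auto simp: FA_iff)

lemma FA_pstar: "p \<in> FA G \<Longrightarrow> pstar p \<in> FA G"
  unfolding pstar_def
  by (intro FA_sum FA_monom) (auto simp: FA_iff wstar_def lstar_def letter_ok_def)

lemma FA_wsubst:
  assumes "endo_data G s"
  shows "\<forall>l\<in>set w. letter_ok G l \<Longrightarrow> wsubst s w \<in> FA G"
proof (induction w)
  case Nil
  then show ?case by (simp add: FA_ncmono)
next
  case (Cons l w)
  have "lsubst s l \<in> FA G"
    using Cons.prems assms by (auto simp: lsubst_def endo_data_def letter_ok_def intro: FA_pstar)
  with Cons show ?case by (simp add: FA_pmul)
qed

lemma FA_psubst: "endo_data G s \<Longrightarrow> p \<in> FA G \<Longrightarrow> psubst s p \<in> FA G"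
  unfolding psubst_def by (intro FA_sum FA_smult FA_wsubst) (auto simp: FA_iff)

section \<open>Graded substitutions into the matrix algebra\<close>

lemma mmul_assoc: "mmul G (mmul G A B) C = mmul G A (mmul G B C)"
  unfolding mmul_def
  by (intro ext) (simp add: sum_distrib_left sum_distrib_right mult.assoc, rule sum.swap)

lemma mmul_cong_right:
  "(\<And>b. b \<in> carrier G \<Longrightarrow> B b c = B' b c) \<Longrightarrow> mmul G A B a c = mmul G A B' a c"
  unfolding mmul_def by (rule sum.cong) auto

lemma mmul_sum_left: "mmul G (\<lambda>a c. \<Sum>i\<in>I. F i a c) B a c = (\<Sum>i\<in>I. mmul G (F i) B a c)"
  and mmul_sum_right: "mmul G B (\<lambda>a c. \<Sum>i\<in>I. F i a c) a c = (\<Sum>i\<in>I. mmul G B (F i) a c)"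
  unfolding mmul_def by (simp_all add: sum_distrib_left sum_distrib_right, (rule sum.swap)+)

lemma mmul_scale_left: "mmul G (\<lambda>a c. k * F a c) B a c = k * mmul G F B a c"
  and mmul_scale_right: "mmul G B (\<lambda>a c. k * F a c) a c = k * mmul G B F a c"
  unfolding mmul_def by (simp_all add: sum_distrib_left algebra_simps)

lemma weval_Nil [simp]: "weval G A [] = mone"
  and weval_Cons [simp]: "weval G A (l # w) = mmul G (leval A l) (weval G A w)"
  by (simp_all add: weval_def)

lemma peval_superset:
  "finite U \<Longrightarrow> words p \<subseteq> U \<Longrightarrow>
    peval G A p a c = (\<Sum>w\<in>U. of_rat (coeff p w) * weval G A w a c)"
  unfolding peval_def by (rule sum_words_superset) auto

lemma peval_add: "peval G A (p + q) a c = peval G A p a c + peval G A q a c"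
  using keys_add[of p q]
  by (simp add: peval_superset[of "words p \<union> words q"] lookup_add of_rat_add distrib_right
      sum.distrib)

lemma peval_zero [simp]: "peval G A 0 a c = 0"
  by (simp add: peval_def)

lemma peval_uminus: "peval G A (- p) a c = - peval G A p a c"
  by (simp add: peval_def of_rat_minus sum_negf)

lemma peval_sum: "peval G A (\<Sum>i\<in>I. f i) a c = (\<Sum>i\<in>I. peval G A (f i) a c)"
  by (induction I rule: infinite_finite_induct) (auto simp: peval_add)

lemma peval_monom: "peval G A (monom w k) a c = of_rat k * weval G A w a c"
  by (subst peval_superset[of "{w}"]) auto

lemma peval_smult: "peval G A (smult k p) a c = of_rat k * peval G A p a c"
  by (simp add: peval_superset[of "words p" "smult k p"] words_smult peval_def[of _ _ p]
      sum_distrib_left of_rat_mult mult.assoc)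

context group
begin

lemma ldeg_closed: "letter_ok G l \<Longrightarrow> ldeg G l \<in> carrier G"
  by (auto simp: ldeg_def letter_ok_def)

lemma wdeg_Nil [simp]: "wdeg G [] = \<one>"
  and wdeg_Cons [simp]: "wdeg G (l # w) = ldeg G l \<otimes> wdeg G w"
  by (simp_all add: wdeg_def)

lemma wdeg_closed: "\<forall>l\<in>set w. letter_ok G l \<Longrightarrow> wdeg G w \<in> carrier G"
  by (induction w) (auto intro: ldeg_closed)

lemma graded_comp_mmul:
  assumes "g \<in> carrier G" "h \<in> carrier G" "graded_comp G g X" "graded_comp G h Y"
  shows "graded_comp G (g \<otimes> h) (mmul G X Y)"
  unfolding graded_comp_def
proof (intro ballI impI)
  fix a c assume ac: "a \<in> carrier G" "c \<in> carrier G" "c \<noteq> a \<otimes> (g \<otimes> h)"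
  have "X a b * Y b c = 0" if b: "b \<in> carrier G" for b
  proof (cases "b = a \<otimes> g")
    case True
    then have "c \<noteq> b \<otimes> h" using ac assms by (simp add: m_assoc)
    then show ?thesis using assms(4) b ac by (simp add: graded_comp_def)
  next
    case False
    then show ?thesis using assms(3) b ac by (simp add: graded_comp_def)
  qed
  then show "mmul G X Y a c = 0" unfolding mmul_def by (intro sum.neutral) blast
qed

lemma graded_comp_mone: "graded_comp G \<one> mone"
  by (simp add: graded_comp_def mone_def)

lemma graded_comp_leval:
  assumes "letter_ok G l" "graded_subst G A"
  shows "graded_comp G (ldeg G l) (leval A l)"
proof (cases "snd (snd l)")
  case False
  then show ?thesis using assms by (simp add: ldeg_def leval_def graded_subst_def letter_ok_def)
next
  case True
  let ?g = "fst (snd l)"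
  have g: "?g \<in> carrier G" "1 \<le> fst l" using assms(1) by (auto simp: letter_ok_def)
  have "graded_comp G ?g (A (fst l) ?g)" using assms(2) g by (simp add: graded_subst_def)
  moreover have "a \<noteq> c \<otimes> ?g"
    if "a \<in> carrier G" "c \<in> carrier G" "c \<noteq> a \<otimes> inv ?g" for a c
    using that g by (metis inv_solve_right)
  ultimately show ?thesis
    using True by (simp add: graded_comp_def ldeg_def leval_def mtrans_def)
qed

lemma graded_comp_weval:
  "\<forall>l\<in>set w. letter_ok G l \<Longrightarrow> graded_subst G A \<Longrightarrow> graded_comp G (wdeg G w) (weval G A w)"
  by (induction w)
    (auto simp: graded_comp_mone intro!: graded_comp_mmul graded_comp_leval ldeg_closed wdeg_closed)

lemma graded_comp_peval:
  assumes "p \<in> FA G" "homogeneous G g p" "graded_subst G A"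
  shows "graded_comp G g (peval G A p)"
  using graded_comp_weval[OF _ assms(3)] assms(1,2)
  by (auto simp: graded_comp_def peval_def FA_iff homogeneous_def intro!: sum.neutral)

lemma graded_subst_compose:
  "endo_data G s \<Longrightarrow> graded_subst G A \<Longrightarrow> graded_subst G (\<lambda>i g. peval G A (s i g))"
  by (auto simp: graded_subst_def endo_data_def intro: graded_comp_peval)

end

locale finite_group = group +
  assumes finite_carrier: "finite (carrier G)"

context finite_group
begin

lemma mmul_mone_left: "a \<in> carrier G \<Longrightarrow> mmul G mone B a c = B a c"
proof -
  have "mmul G mone B a c = (\<Sum>b\<in>carrier G. if a = b then B a c else 0)"
    unfolding mmul_def mone_def by (rule sum.cong) auto
  then show "a \<in> carrier G \<Longrightarrow> ?thesis" using finite_carrier by simp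
qed

lemma mmul_mone_right: "c \<in> carrier G \<Longrightarrow> mmul G B mone a c = B a c"
  using finite_carrier by (simp add: mmul_def mone_def if_distrib eq_commute cong: if_cong)

lemma weval_append:
  "a \<in> carrier G \<Longrightarrow> c \<in> carrier G \<Longrightarrow>
    weval G A (u @ v) a c = mmul G (weval G A u) (weval G A v) a c"
proof (induction u arbitrary: a)
  case Nil
  then show ?case by (simp add: mmul_mone_left)
next
  case (Cons l u)
  then have "weval G A ((l # u) @ v) a c = mmul G (leval A l) (mmul G (weval G A u) (weval G A v)) a c"
    by simp (rule mmul_cong_right, simp)
  then show ?case by (simp add: mmul_assoc)
qed

lemma peval_pmul:
  assumes "a \<in> carrier G" "c \<in> carrier G"
  shows "peval G A (pmul p q) a c = mmul G (peval G A p) (peval G A q) a c"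
proof -
  have "peval G A (pmul p q) a c = (\<Sum>u\<in>words p. \<Sum>v\<in>words q.
      of_rat (coeff p u) * (of_rat (coeff q v) * mmul G (weval G A u) (weval G A v) a c))"
    by (simp add: pmul_def peval_sum peval_monom weval_append[OF assms] of_rat_mult mult.assoc)
  also have "\<dots> = mmul G (peval G A p) (peval G A q) a c"
    by (simp add: peval_def[abs_def] mmul_sum_left mmul_sum_right mmul_scale_left mmul_scale_right)
  finally show ?thesis .
qed

lemma weval_wstar:
  "a \<in> carrier G \<Longrightarrow> c \<in> carrier G \<Longrightarrow> weval G A (wstar w) a c = weval G A w c a"
proof (induction w arbitrary: a c)
  case Nil
  then show ?case by (simp add: wstar_def mone_def)
next
  case (Cons l w)
  have "weval G A (wstar (l # w)) a c = mmul G (weval G A (wstar w)) (weval G A [lstar l]) a c"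
    using Cons.prems by (simp add: wstar_def weval_append)
  also have "\<dots> = (\<Sum>b\<in>carrier G. weval G A w b a * leval A l c b)"
    unfolding mmul_def using Cons
    by (intro sum.cong) (auto simp: mmul_mone_right leval_def lstar_def mtrans_def)
  also have "\<dots> = weval G A (l # w) c a"
    by (simp add: mmul_def mult.commute)
  finally show ?case .
qed

lemma peval_pstar:
  "a \<in> carrier G \<Longrightarrow> c \<in> carrier G \<Longrightarrow> peval G A (pstar p) a c = peval G A p c a"
  unfolding pstar_def[of p] by (simp add: peval_sum peval_monom weval_wstar peval_def[of _ _ p])

lemma peval_wsubst:
  "a \<in> carrier G \<Longrightarrow> c \<in> carrier G \<Longrightarrow>
    peval G A (wsubst s w) a c = weval G (\<lambda>i g. peval G A (s i g)) w a c"
proof (induction w arbitrary: a)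
  case Nil
  then show ?case by (simp add: ncmono_def peval_monom)
next
  case (Cons l w)
  then show ?case
    by (simp add: peval_pmul mmul_def lsubst_def leval_def mtrans_def peval_pstar cong: sum.cong)
qed

lemma peval_psubst:
  "a \<in> carrier G \<Longrightarrow> c \<in> carrier G \<Longrightarrow>
    peval G A (psubst s p) a c = peval G (\<lambda>i g. peval G A (s i g)) p a c"
  by (simp add: psubst_def peval_sum peval_def[of _ _ p] peval_wsubst peval_smult)

lemma tstar_ideal_graded_star_ids: "tstar_ideal G (graded_star_ids G)"
  unfolding tstar_ideal_def graded_star_ids_def
  by (auto simp: FA_add FA_uminus FA_pmul FA_pstar FA_psubst peval_add peval_uminus peval_pmul
      peval_pstar peval_psubst graded_subst_compose mmul_def)

end

section \<open>Multihomogeneous components\<close>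

definition rat_subspace :: "'g ncpoly set \<Rightarrow> bool" where
  "rat_subspace C \<longleftrightarrow> 0 \<in> C \<and> (\<forall>p\<in>C. \<forall>q\<in>C. p + q \<in> C) \<and> (\<forall>p\<in>C. \<forall>c. smult c p \<in> C)"

lemma rat_subspace_sum: "rat_subspace C \<Longrightarrow> (\<And>i. i \<in> A \<Longrightarrow> f i \<in> C) \<Longrightarrow> (\<Sum>i\<in>A. f i) \<in> C"
  by (induction A rule: infinite_finite_induct) (auto simp: rat_subspace_def)

lemma rat_subspace_smult: "rat_subspace C \<Longrightarrow> p \<in> C \<Longrightarrow> smult c p \<in> C"
  unfolding rat_subspace_def by blast

lemma rat_subspace_diff: "rat_subspace C \<Longrightarrow> p \<in> C \<Longrightarrow> q \<in> C \<Longrightarrow> p - q \<in> C"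
proof -
  assume "rat_subspace C" "p \<in> C" "q \<in> C"
  moreover have "smult (-1) q = - q"
    by (rule poly_mapping_eqI) simp
  ultimately show ?thesis
    unfolding rat_subspace_def by (metis diff_conv_add_uminus)
qed

lemma tstar_ideal_rat_subspace: "tstar_ideal G C \<Longrightarrow> rat_subspace C"
  unfolding rat_subspace_def tstar_ideal_def smult_def by (auto simp: FA_monom)

lemma power_sum_diff:
  fixes t a :: rat
  shows "(\<Sum>k\<le>Suc D. (t^k - a^k) * x k) =
    (t - a) * (\<Sum>i\<le>D. t^i * (\<Sum>k\<in>{Suc i..Suc D}. a^(k - Suc i) * x k))"
proof -
  have "(\<Sum>k\<le>Suc D. (t^k - a^k) * x k) = (\<Sum>k\<le>Suc D. \<Sum>i<k. (t - a) * (a^(k - Suc i) * t^i * x k))"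
    by (simp add: power_diff_sumr2 sum_distrib_left sum_distrib_right mult.assoc)
  also have "\<dots> = (\<Sum>i<Suc D. \<Sum>k\<in>{Suc i..Suc D}. (t - a) * (a^(k - Suc i) * t^i * x k))"
    by (rule sum.nested_swap')
  also have "\<dots> = (t - a) * (\<Sum>i\<le>D. t^i * (\<Sum>k\<in>{Suc i..Suc D}. a^(k - Suc i) * x k))"
    by (simp add: lessThan_Suc_atMost sum_distrib_left algebra_simps)
  finally show ?thesis .
qed

text \<open>With \<open>P t = (\<Sum>k\<le>D. t^k F k)\<close>, the difference quotients \<open>(P t - P a) / (t - a)\<close> are again
  such sums, of degree \<open>D - 1\<close> and with top coefficient \<open>F D\<close>.\<close>

lemma power_sum_top_coeff_mem:
  assumes C: "rat_subspace C"
  shows "finite X \<Longrightarrow> (\<And>t. t \<notin> X \<Longrightarrow> (\<Sum>k\<le>D. smult (t^k) (F k)) \<in> C) \<Longrightarrow> F D \<in> C"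
proof (induction D arbitrary: F X)
  case 0
  obtain t :: rat where "t \<notin> X"
    using ex_new_if_finite[OF infinite_UNIV_char_0 0(1)] by blast
  with 0(2) show ?case by fastforce
next
  case (Suc D)
  obtain a :: rat where a: "a \<notin> X"
    using ex_new_if_finite[OF infinite_UNIV_char_0 Suc(2)] by blast
  define g where "g i = (\<Sum>k\<in>{Suc i..Suc D}. smult (a^(k - Suc i)) (F k))" for i
  have "(\<Sum>i\<le>D. smult (t^i) (g i)) \<in> C" if t: "t \<notin> insert a X" for t
  proof -
    have difference_quotient: "(\<Sum>i\<le>D. smult (t^i) (g i)) =
      smult (1 / (t - a)) ((\<Sum>k\<le>Suc D. smult (t^k) (F k)) - (\<Sum>k\<le>Suc D. smult (a^k) (F k)))"
    proof (rule poly_mapping_eqI)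
      fix w
      have "t - a \<noteq> 0" using t by auto
      moreover have "(\<Sum>k\<le>Suc D. t^k * coeff (F k) w) - (\<Sum>k\<le>Suc D. a^k * coeff (F k) w) =
          (t - a) * (\<Sum>i\<le>D. t^i * (\<Sum>k\<in>{Suc i..Suc D}. a^(k - Suc i) * coeff (F k) w))"
        using power_sum_diff[where t=t and a=a and D=D and x="\<lambda>k. coeff (F k) w"]
        by (simp add: left_diff_distrib sum_subtractf)
      ultimately show "coeff (\<Sum>i\<le>D. smult (t^i) (g i)) w =
          coeff (smult (1 / (t - a)) ((\<Sum>k\<le>Suc D. smult (t^k) (F k)) - (\<Sum>k\<le>Suc D. smult (a^k) (F k)))) w"
        unfolding g_def by (simp only: lookup_sum coeff_smult lookup_minus) simp
    qed
    show ?thesis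
      unfolding difference_quotient
      by (intro rat_subspace_smult[OF C] rat_subspace_diff[OF C] Suc.prems(2)) (use t a in auto)
  qed
  then have "g D \<in> C" using Suc.IH[of "insert a X" g] Suc.prems(1) by blast
  then show ?case by (simp add: g_def)
qed

lemma power_sum_coeff_mem:
  assumes C: "rat_subspace C"
  shows "finite X \<Longrightarrow> (\<And>t. t \<notin> X \<Longrightarrow> (\<Sum>k\<le>D. smult (t^k) (F k)) \<in> C) \<Longrightarrow> k \<le> D \<Longrightarrow> F k \<in> C"
proof (induction D arbitrary: k)
  case 0
  then show ?case using power_sum_top_coeff_mem[OF C, of X F 0] by simp
next
  case (Suc D)
  have top: "F (Suc D) \<in> C" using power_sum_top_coeff_mem[OF C] Suc.prems by blast
  have "(\<Sum>k\<le>D. smult (t^k) (F k)) \<in> C" if "t \<notin> X" for t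
  proof -
    have "(\<Sum>k\<le>D. smult (t^k) (F k)) = (\<Sum>k\<le>Suc D. smult (t^k) (F k)) - smult (t^Suc D) (F (Suc D))"
      by simp
    also have "\<dots> \<in> C"
      by (intro rat_subspace_diff[OF C] rat_subspace_smult[OF C] Suc.prems(2) top that)
    finally show ?thesis .
  qed
  then have "k \<le> D \<Longrightarrow> F k \<in> C" using Suc.IH Suc.prems(1) by blast
  then show ?case using Suc.prems(3) top le_Suc_eq by blast
qed

definition var_of :: "'g letter \<Rightarrow> nat \<times> 'g" where
  "var_of l = (fst l, fst (snd l))"

definition occurrences :: "nat \<times> 'g \<Rightarrow> 'g letter list \<Rightarrow> nat" where
  "occurrences v w = count_list (map var_of w) v"

definition multidegree :: "'g letter list \<Rightarrow> (nat \<times> 'g) multiset" where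
  "multidegree w = mset (map var_of w)"

lemma occurrences_Nil [simp]: "occurrences v [] = 0"
  and occurrences_Cons [simp]:
    "occurrences v (l # w) = (if var_of l = v then Suc (occurrences v w) else occurrences v w)"
  by (simp_all add: occurrences_def)

lemma occurrences_le_length: "occurrences v w \<le> length w"
  by (induction w) auto

lemma count_multidegree: "count (multidegree w) v = occurrences v w"
  by (simp only: multidegree_def occurrences_def count_mset)

lemma occurrences_eq_0_iff: "occurrences v w = 0 \<longleftrightarrow> v \<notin> var_of ` set w"
  by (induction w) auto

lemma multidegree_Nil [simp]: "multidegree [] = {#}"
  and multidegree_Cons [simp]: "multidegree (l # w) = add_mset (var_of l) (multidegree w)"
  by (simp_all add: multidegree_def)

definition restrict_words :: "('g letter list \<Rightarrow> bool) \<Rightarrow> 'g ncpoly \<Rightarrow> 'g ncpoly" where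
  "restrict_words P f = (\<Sum>w\<in>{w\<in>words f. P w}. monom w (coeff f w))"

lemma coeff_restrict_words: "coeff (restrict_words P f) u = (if P u then coeff f u else 0)"
  by (auto simp: restrict_words_def lookup_sum coeff_monom in_keys_iff)

lemma words_restrict_words: "words (restrict_words P f) = {w\<in>words f. P w}"
  by (auto simp: in_keys_iff coeff_restrict_words split: if_splits)

lemma restrict_words_add: "restrict_words P (p + q) = restrict_words P p + restrict_words P q"
  and restrict_words_zero [simp]: "restrict_words P 0 = 0"
  and restrict_words_smult: "restrict_words P (smult c p) = smult c (restrict_words P p)"
  and restrict_words_restrict_words:
    "restrict_words P (restrict_words Q f) = restrict_words (\<lambda>w. Q w \<and> P w) f"
  and restrict_words_True: "restrict_words (\<lambda>_. True) f = f"
  and restrict_words_False: "restrict_words (\<lambda>_. False) f = 0"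
  and restrict_words_monom: "restrict_words P (monom w c) = (if P w then monom w c else 0)"
  by (rule poly_mapping_eqI; simp add: coeff_restrict_words lookup_add coeff_monom)+

lemma restrict_words_sum: "restrict_words P (\<Sum>i\<in>A. f i) = (\<Sum>i\<in>A. restrict_words P (f i))"
  by (induction A rule: infinite_finite_induct) (auto simp: restrict_words_add)

lemma restrict_words_cong:
  "(\<And>w. w \<in> words f \<Longrightarrow> P w \<longleftrightarrow> Q w) \<Longrightarrow> restrict_words P f = restrict_words Q f"
  by (rule poly_mapping_eqI) (auto simp: coeff_restrict_words in_keys_iff)

lemma sum_multihomogeneous_components:
  "f = (\<Sum>M\<in>multidegree ` words f. restrict_words (\<lambda>w. multidegree w = M) f)"
  by (rule poly_mapping_eqI) (auto simp: lookup_sum coeff_restrict_words in_keys_iff)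

definition xvar :: "nat \<Rightarrow> 'g \<Rightarrow> 'g ncpoly" where
  "xvar i g = ncmono [(i, g, False)]"

lemma pstar_ncmono_letter [simp]: "pstar (ncmono [l]) = ncmono [lstar l]"
  by (simp add: ncmono_def wstar_def)

lemma (in group) xvar_FA_homogeneous:
  "1 \<le> i \<Longrightarrow> g \<in> carrier G \<Longrightarrow> xvar i g \<in> FA G \<and> homogeneous G g (xvar i g)"
  by (auto simp: xvar_def ncmono_def FA_iff letter_ok_def homogeneous_def wdeg_def ldeg_def)

lemma homogeneous_smult: "homogeneous G g p \<Longrightarrow> homogeneous G g (smult c p)"
  using words_smult by (fastforce simp: homogeneous_def)

lemma homogeneous_add: "homogeneous G g p \<Longrightarrow> homogeneous G g q \<Longrightarrow> homogeneous G g (p + q)"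
  using keys_add by (fastforce simp: homogeneous_def)

definition scale_var :: "nat \<times> 'g \<Rightarrow> rat \<Rightarrow> nat \<Rightarrow> 'g \<Rightarrow> 'g ncpoly" where
  "scale_var v t i g = (if (i, g) = v then smult t (xvar i g) else xvar i g)"

lemma (in group) endo_data_scale_var: "endo_data G (scale_var v t)"
  using xvar_FA_homogeneous
  by (auto simp: endo_data_def scale_var_def intro: FA_smult homogeneous_smult)

lemma wsubst_scale_var: "wsubst (scale_var v t) w = smult (t ^ occurrences v w) (ncmono w)"
proof (induction w)
  case (Cons l w)
  have "lsubst (scale_var v t) l = smult (if var_of l = v then t else 1) (ncmono [l])"
    by (cases l) (auto simp: lsubst_def scale_var_def var_of_def pstar_smult xvar_def lstar_def)
  with Cons show ?case
    by (simp add: pmul_smult_left pmul_smult_right pmul_ncmono mult.commute)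
qed simp

lemma psubst_scale_var:
  assumes "\<forall>w\<in>words f. length w \<le> D"
  shows "psubst (scale_var v t) f = (\<Sum>k\<le>D. smult (t^k) (restrict_words (\<lambda>w. occurrences v w = k) f))"
proof (rule poly_mapping_eqI)
  fix u
  have "coeff (psubst (scale_var v t) f) u = coeff f u * t ^ occurrences v u"
    by (auto simp: psubst_def lookup_sum wsubst_scale_var ncmono_def coeff_monom in_keys_iff
        if_distrib cong: if_cong)
  also have "\<dots> = (\<Sum>k\<le>D. if occurrences v u = k then t^k * coeff f u else 0)"
    using assms occurrences_le_length[of v u] by (auto simp: in_keys_iff) (metis in_keys_iff le_trans)
  also have "\<dots> = (\<Sum>k\<le>D. t^k * (if occurrences v u = k then coeff f u else 0))"
    by (rule sum.cong) auto
  finally show "coeff (psubst (scale_var v t) f) u =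
      coeff (\<Sum>k\<le>D. smult (t^k) (restrict_words (\<lambda>w. occurrences v w = k) f)) u"
    by (simp add: lookup_sum coeff_restrict_words)
qed

text \<open>Substituting \<open>t x\<^sub>v\<close> for \<open>x\<^sub>v\<close> multiplies the component of degree \<open>k\<close> in \<open>x\<^sub>v\<close> by
  \<open>t^k\<close>; since \<open>\<rat>\<close> is infinite, these components can be separated.\<close>

lemma (in group) tstar_ideal_restrict_occurrences:
  assumes C: "tstar_ideal G C" and f: "f \<in> C"
  shows "restrict_words (\<lambda>w. occurrences v w = k) f \<in> C"
proof -
  define D where "D = (\<Sum>w\<in>words f. length w)"
  have len: "\<forall>w\<in>words f. length w \<le> D"
    unfolding D_def by (auto intro: member_le_sum)
  have "psubst (scale_var v t) f \<in> C" for t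
    using C f endo_data_scale_var unfolding tstar_ideal_def by blast
  then have sums: "(\<Sum>k\<le>D. smult (t^k) (restrict_words (\<lambda>w. occurrences v w = k) f)) \<in> C" for t
    by (simp add: psubst_scale_var[OF len])
  show ?thesis
  proof (cases "k \<le> D")
    case True
    then show ?thesis
      by (rule power_sum_coeff_mem[OF tstar_ideal_rat_subspace[OF C] finite.emptyI sums])
  next
    case False
    then have "restrict_words (\<lambda>w. occurrences v w = k) f = restrict_words (\<lambda>_. False) f"
      using len occurrences_le_length[of v] by (intro restrict_words_cong) (meson le_trans)
    then show ?thesis using C by (simp add: restrict_words_False tstar_ideal_def)
  qed
qed

lemma (in group) tstar_ideal_multihomogeneous_component:
  assumes C: "tstar_ideal G C" and f: "f \<in> C"
  shows "restrict_words (\<lambda>w. multidegree w = M) f \<in> C"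
proof -
  define V where "V = var_of ` (\<Union>w\<in>words f. set w) \<union> set_mset M"
  have "finite V" by (simp add: V_def)
  have fixed_degrees: "restrict_words (\<lambda>w. \<forall>v\<in>V'. occurrences v w = count M v) f \<in> C"
    if "finite V'" for V'
    using that
  proof (induction V' rule: finite_induct)
    case empty
    then show ?case using f by (simp add: restrict_words_True)
  next
    case (insert v V')
    then show ?case
      using tstar_ideal_restrict_occurrences[OF C insert.IH, of v "count M v"]
      by (simp add: restrict_words_restrict_words conj_commute)
  qed
  have "restrict_words (\<lambda>w. \<forall>v\<in>V. occurrences v w = count M v) f = restrict_words (\<lambda>w. multidegree w = M) f"
  proof (rule restrict_words_cong)
    fix w assume "w \<in> words f"
    then have "occurrences v w = count M v" if "v \<notin> V" for v
      using that by (auto simp: V_def occurrences_eq_0_iff not_in_iff)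
    then show "(\<forall>v\<in>V. occurrences v w = count M v) \<longleftrightarrow> multidegree w = M"
      by (auto simp: multiset_eq_iff count_multidegree[symmetric])
  qed
  with fixed_degrees[OF \<open>finite V\<close>] show ?thesis by simp
qed

section \<open>Linearization\<close>

definition linearize_var :: "nat \<times> 'g \<Rightarrow> nat \<Rightarrow> nat \<Rightarrow> 'g \<Rightarrow> 'g ncpoly" where
  "linearize_var v y i g = (if (i, g) = v then xvar i g + xvar y g else xvar i g)"

definition rename_vars :: "(nat \<times> 'g \<Rightarrow> nat) \<Rightarrow> nat \<Rightarrow> 'g \<Rightarrow> 'g ncpoly" where
  "rename_vars r i g = xvar (r (i, g)) g"

definition identify_var :: "nat \<times> 'g \<Rightarrow> nat \<Rightarrow> nat \<Rightarrow> 'g \<Rightarrow> 'g ncpoly" where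
  "identify_var v y = rename_vars (\<lambda>x. if x = (y, snd v) then fst v else fst x)"

lemma lsubst_rename_vars:
  "lsubst (rename_vars r) l = ncmono [(r (var_of l), fst (snd l), snd (snd l))]"
  by (cases l) (auto simp: lsubst_def rename_vars_def var_of_def xvar_def lstar_def)

lemma words_psubst_letterwise:
  assumes "\<And>l. lsubst s l = ncmono [h l]"
  shows "words (psubst s f) \<subseteq> map h ` words f"
proof -
  have "words (psubst s f) \<subseteq> (\<Union>w\<in>words f. words (monom (map h w) (coeff f w)))"
    unfolding psubst_letterwise[OF assms] by (rule keys_sum)
  also have "\<dots> \<subseteq> map h ` words f"
    by auto
  finally show ?thesis .
qed

lemma psubst_rename_vars_inverse:
  assumes "\<And>w l. w \<in> words f \<Longrightarrow> l \<in> set w \<Longrightarrow> r' (r (var_of l), fst (snd l)) = fst l"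
  shows "psubst (rename_vars r') (psubst (rename_vars r) f) = f"
proof -
  have "psubst (rename_vars r') (psubst (rename_vars r) f) =
      (\<Sum>w\<in>words f. monom (map (\<lambda>l. (r' (r (var_of l), fst (snd l)), fst (snd l), snd (snd l))) w) (coeff f w))"
    by (simp add: psubst_letterwise[OF lsubst_rename_vars] psubst_sum smult_sum
        wsubst_letterwise[OF lsubst_rename_vars] ncmono_def var_of_def comp_def)
  also have "\<dots> = (\<Sum>w\<in>words f. monom w (coeff f w))"
    using assms by (intro sum.cong refl arg_cong2[where f=monom] map_idI) auto
  finally show ?thesis by (simp flip: monom_expansion)
qed

definition rename_letter :: "nat \<Rightarrow> 'g letter \<Rightarrow> 'g letter" where
  "rename_letter y l = (y, fst (snd l), snd (snd l))"

fun replace_once :: "nat \<times> 'g \<Rightarrow> nat \<Rightarrow> 'g letter list \<Rightarrow> 'g ncpoly" where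
  "replace_once v y [] = 0"
| "replace_once v y (l # w) = pmul (ncmono [l]) (replace_once v y w) +
    (if var_of l = v then ncmono (rename_letter y l # w) else 0)"

lemma var_of_rename_letter: "var_of l = v \<Longrightarrow> var_of (rename_letter y l) = (y, snd v)"
  by (auto simp: var_of_def rename_letter_def)

lemma restrict_words_pmul_letter:
  "restrict_words P (pmul (ncmono [l]) p) = pmul (ncmono [l]) (restrict_words (\<lambda>u. P (l # u)) p)"
proof -
  have "restrict_words P (pmul (ncmono [l]) p) = (\<Sum>w\<in>words p. restrict_words P (monom (l # w) (coeff p w)))"
    by (simp add: ncmono_def pmul_monom_left restrict_words_sum)
  also have "\<dots> = (\<Sum>w\<in>words p. monom (l # w) (if P (l # w) then coeff p w else 0))"
    by (auto simp: restrict_words_monom intro!: sum.cong)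
  also have "\<dots> = pmul (ncmono [l]) (restrict_words (\<lambda>u. P (l # u)) p)"
    by (simp add: ncmono_def pmul_superset[of "{[l]}" _ "words p"] words_restrict_words coeff_restrict_words)
  finally show ?thesis .
qed

lemma restrict_wsubst_linearize_var:
  assumes "\<forall>l\<in>set w. var_of l \<noteq> (y, snd v)"
  shows "restrict_words (\<lambda>u. occurrences (y, snd v) u = 0) (wsubst (linearize_var v y) w) = ncmono w \<and>
    restrict_words (\<lambda>u. occurrences (y, snd v) u = 1) (wsubst (linearize_var v y) w) = replace_once v y w"
  using assms
proof (induction w)
  case Nil
  show ?case by (simp add: ncmono_def restrict_words_monom)
next
  case (Cons l w)
  have "lsubst (linearize_var v y) l =
      ncmono [l] + (if var_of l = v then ncmono [rename_letter y l] else 0)"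
    by (cases l) (auto simp: lsubst_def linearize_var_def var_of_def pstar_add xvar_def lstar_def
        rename_letter_def)
  then have "wsubst (linearize_var v y) (l # w) = pmul (ncmono [l]) (wsubst (linearize_var v y) w) +
      (if var_of l = v then pmul (ncmono [rename_letter y l]) (wsubst (linearize_var v y) w) else 0)"
    by (simp add: pmul_add_left)
  with Cons var_of_rename_letter[of l v y] show ?case
    by (simp add: restrict_words_add restrict_words_pmul_letter restrict_words_False pmul_ncmono
        del: wsubst_Cons)
qed

lemma wsubst_identify_var:
  "\<forall>l\<in>set w. var_of l \<noteq> (y, snd v) \<Longrightarrow> wsubst (identify_var v y) w = ncmono w"
  unfolding identify_var_def wsubst_letterwise[OF lsubst_rename_vars]
  by (auto simp: var_of_def intro!: arg_cong[where f=ncmono] map_idI)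

lemma psubst_identify_var_replace_once:
  assumes "\<forall>l\<in>set w. var_of l \<noteq> (y, snd v)"
  shows "psubst (identify_var v y) (replace_once v y w) = smult (of_nat (occurrences v w)) (ncmono w)"
  using assms
proof (induction w)
  case (Cons l w)
  have "lsubst (identify_var v y) l = ncmono [l]"
    using Cons.prems by (auto simp: identify_var_def lsubst_rename_vars var_of_def)
  then have head: "psubst (identify_var v y) (pmul (ncmono [l]) (replace_once v y w)) =
      smult (of_nat (occurrences v w)) (ncmono (l # w))"
    using Cons by (simp add: psubst_pmul pmul_smult_right pmul_ncmono)
  show ?case
  proof (cases "var_of l = v")
    case True
    then have "lsubst (identify_var v y) (rename_letter y l) = ncmono [l]"
      by (auto simp: identify_var_def lsubst_rename_vars var_of_def rename_letter_def)
    then have "psubst (identify_var v y) (ncmono (rename_letter y l # w)) = ncmono (l # w)"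
      using Cons.prems by (simp add: wsubst_identify_var pmul_ncmono)
    with True head show ?thesis by (simp add: psubst_add smult_add_left add.commute)
  next
    case False
    with head show ?thesis by (simp add: psubst_add)
  qed
qed simp

lemma words_pmul_letter: "words (pmul (ncmono [l]) p) \<subseteq> (\<lambda>u. l # u) ` words p"
proof -
  have "words (pmul (ncmono [l]) p) \<subseteq> (\<Union>u\<in>words p. words (monom (l # u) (coeff p u)))"
    unfolding ncmono_def pmul_monom_left by (rule order_trans[OF keys_sum]) simp
  then show ?thesis by (auto split: if_splits)
qed

lemma multidegree_replace_once:
  "u \<in> words (replace_once v y w) \<Longrightarrow> add_mset v (multidegree u) = add_mset (y, snd v) (multidegree w)"
proof (induction w arbitrary: u)
  case (Cons l w)
  then have "u \<in> words (pmul (ncmono [l]) (replace_once v y w)) \<or> (var_of l = v \<and> u = rename_letter y l # w)"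
    using keys_add by (fastforce simp: ncmono_def split: if_splits)
  then show ?case
  proof
    assume "u \<in> words (pmul (ncmono [l]) (replace_once v y w))"
    then obtain u' where "u = l # u'" "u' \<in> words (replace_once v y w)"
      using words_pmul_letter by blast
    with Cons.IH show ?thesis by (simp add: add_mset_commute)
  qed (use var_of_rename_letter[of l v y] in \<open>simp add: add_mset_commute\<close>)
qed simp

lemma multidegree_sum_replace_once:
  assumes deg: "\<forall>w\<in>words f. multidegree w = M" and "v \<noteq> (y, snd v)"
  shows "\<forall>u\<in>words (\<Sum>w\<in>words f. smult (coeff f w) (replace_once v y w)).
    multidegree u = add_mset (y, snd v) (M - {#v#})"
proof
  fix u assume "u \<in> words (\<Sum>w\<in>words f. smult (coeff f w) (replace_once v y w))"
  then obtain w where w: "w \<in> words f" "u \<in> words (replace_once v y w)"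
    using keys_sum[of "\<lambda>w. smult (coeff f w) (replace_once v y w)" "words f"] words_smult by blast
  then have "add_mset v (multidegree u) - {#v#} = add_mset (y, snd v) M - {#v#}"
    using multidegree_replace_once[OF w(2)] deg by simp
  then have "multidegree u = add_mset (y, snd v) M - {#v#}"
    by simp
  also have "\<dots> = add_mset (y, snd v) (M - {#v#})"
    using \<open>v \<noteq> (y, snd v)\<close> by (rule diff_union_swap[symmetric])
  finally show "multidegree u = add_mset (y, snd v) (M - {#v#})" .
qed

context group
begin

lemma endo_data_linearize_var: "1 \<le> y \<Longrightarrow> endo_data G (linearize_var v y)"
  using xvar_FA_homogeneous by (auto simp: endo_data_def linearize_var_def intro: FA_add homogeneous_add)

lemma endo_data_rename_vars: "(\<And>i g. 1 \<le> i \<Longrightarrow> 1 \<le> r (i, g)) \<Longrightarrow> endo_data G (rename_vars r)"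
  using xvar_FA_homogeneous by (auto simp: endo_data_def rename_vars_def)

lemma endo_data_identify_var: "1 \<le> fst v \<Longrightarrow> endo_data G (identify_var v y)"
  unfolding identify_var_def by (rule endo_data_rename_vars) auto

text \<open>Identifying the fresh variable \<open>x\<^sub>y\<close> with \<open>x\<^sub>v\<close> turns the partial linearization back into
  \<open>d f\<close>, where \<open>d\<close> is the degree of \<open>f\<close> in \<open>x\<^sub>v\<close>; dividing by \<open>d\<close> needs characteristic 0.\<close>

lemma tstar_ideal_replace_once_iff:
  assumes C: "tstar_ideal G C" and v: "1 \<le> fst v" and y: "1 \<le> y"
    and fresh: "\<forall>w\<in>words f. \<forall>l\<in>set w. var_of l \<noteq> (y, snd v)"
    and deg: "\<forall>w\<in>words f. occurrences v w = d" and "d \<noteq> 0"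
  shows "(\<Sum>w\<in>words f. smult (coeff f w) (replace_once v y w)) \<in> C \<longleftrightarrow> f \<in> C"
proof
  let ?F = "\<Sum>w\<in>words f. smult (coeff f w) (replace_once v y w)"
  have "psubst (identify_var v y) ?F = (\<Sum>w\<in>words f. smult (of_nat d) (monom w (coeff f w)))"
    unfolding psubst_sum using fresh deg
    by (intro sum.cong) (auto simp: psubst_smult psubst_identify_var_replace_once ncmono_def mult.commute)
  also have "\<dots> = smult (of_nat d) f"
    by (simp only: smult_sum[symmetric] monom_expansion[of f, symmetric])
  finally have identified: "psubst (identify_var v y) ?F = smult (of_nat d) f" .
  assume "?F \<in> C"
  then have "smult (1 / of_nat d) (psubst (identify_var v y) ?F) \<in> C"
    using C endo_data_identify_var[OF v]
    by (auto simp: tstar_ideal_def intro: rat_subspace_smult[OF tstar_ideal_rat_subspace[OF C]])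
  then show "f \<in> C" using identified \<open>d \<noteq> 0\<close> by simp
next
  assume "f \<in> C"
  then have "psubst (linearize_var v y) f \<in> C"
    using C endo_data_linearize_var[OF y] by (auto simp: tstar_ideal_def)
  then have "restrict_words (\<lambda>u. occurrences (y, snd v) u = 1) (psubst (linearize_var v y) f) \<in> C"
    by (rule tstar_ideal_restrict_occurrences[OF C])
  moreover have "restrict_words (\<lambda>u. occurrences (y, snd v) u = 1) (psubst (linearize_var v y) f) =
      (\<Sum>w\<in>words f. smult (coeff f w) (replace_once v y w))"
    unfolding psubst_def restrict_words_sum restrict_words_smult
    using restrict_wsubst_linearize_var[of _ y v] fresh by (intro sum.cong refl) auto
  ultimately show "(\<Sum>w\<in>words f. smult (coeff f w) (replace_once v y w)) \<in> C" by simp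
qed

end

section \<open>Multilinear identities\<close>

lemma length_Wact_mono [simp]: "length (Wact_mono n \<sigma> \<pi> \<gamma>) = n"
  by (simp add: Wact_mono_def)

lemma nth_Wact_mono:
  "p < n \<Longrightarrow> Wact_mono n \<sigma> \<pi> \<gamma> ! p = (\<pi> (Suc p), \<sigma> (\<pi> (Suc p)), \<gamma> (\<pi> (Suc p)))"
  by (simp add: Wact_mono_def nth_upt del: upt_Suc)

lemma permutes_nth_distinct:
  assumes "distinct xs" and set: "set xs = {1..length xs}"
  shows "(\<lambda>j. if j \<in> {1..length xs} then xs ! (j - 1) else j) permutes {1..length xs}"
    (is "?\<pi> permutes ?A")
proof (rule bij_imp_permutes)
  have inj: "inj_on ?\<pi> ?A"
  proof (rule inj_onI)
    fix j j' assume "j \<in> ?A" "j' \<in> ?A" "?\<pi> j = ?\<pi> j'"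
    with \<open>distinct xs\<close> show "j = j'" by (auto simp: nth_eq_iff_index_eq)
  qed
  moreover have "?\<pi> j \<in> ?A" if "j \<in> ?A" for j
    using that set nth_mem[of "j - 1" xs] by auto
  then have "?\<pi> ` ?A \<subseteq> ?A"
    by blast
  ultimately have "?\<pi> ` ?A = ?A"
    by (intro endo_inj_surj) auto
  with inj show "bij_betw ?\<pi> ?A ?A" by (simp add: bij_betw_def)
qed auto

lemma word_eq_Wact_mono:
  assumes len: "length u = n" and dist: "distinct (map fst u)" and set: "set (map fst u) = {1..n}"
    and deg: "\<forall>l\<in>set u. fst (snd l) = \<sigma> (fst l)"
  shows "\<exists>\<pi> \<gamma>. \<pi> permutes {1..n} \<and> (\<forall>j. \<gamma> j \<longrightarrow> j \<in> {1..n}) \<and> u = Wact_mono n \<sigma> \<pi> \<gamma>"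
proof (intro exI conjI)
  define \<pi> where "\<pi> = (\<lambda>j. if j \<in> {1..n} then map fst u ! (j - 1) else j)"
  define \<gamma> where "\<gamma> i = (\<exists>l\<in>set u. fst l = i \<and> snd (snd l))" for i
  show "\<pi> permutes {1..n}"
    using permutes_nth_distinct[OF dist] set len by (simp add: \<pi>_def)
  show "\<forall>j. \<gamma> j \<longrightarrow> j \<in> {1..n}"
  proof (intro allI impI)
    fix j assume "\<gamma> j"
    then have "j \<in> set (map fst u)" by (auto simp: \<gamma>_def)
    with set show "j \<in> {1..n}" by simp
  qed
  have \<gamma>: "\<gamma> (fst l) = snd (snd l)" if "l \<in> set u" for l
    using that dist unfolding \<gamma>_def distinct_map inj_on_def by blast
  show "u = Wact_mono n \<sigma> \<pi> \<gamma>"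
  proof (rule nth_equalityI)
    fix p assume "p < length u"
    then have "u ! p \<in> set u" "\<pi> (Suc p) = fst (u ! p)" "p < n"
      using len by (auto simp: \<pi>_def)
    moreover have "fst (snd (u ! p)) = \<sigma> (fst (u ! p))" "\<gamma> (fst (u ! p)) = snd (snd (u ! p))"
      using deg \<gamma> \<open>u ! p \<in> set u\<close> by auto
    ultimately show "u ! p = Wact_mono n \<sigma> \<pi> \<gamma> ! p"
      by (simp add: nth_Wact_mono prod_eq_iff)
  qed (simp add: len)
qed

lemma Wact_mono_inj:
  assumes \<pi>: "\<pi> permutes {1..n}" and \<pi>': "\<pi>' permutes {1..n}"
    and \<gamma>: "\<forall>j. \<gamma> j \<longrightarrow> j \<in> {1..n}" and \<gamma>': "\<forall>j. \<gamma>' j \<longrightarrow> j \<in> {1..n}"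
    and eq: "Wact_mono n \<sigma> \<pi> \<gamma> = Wact_mono n \<sigma> \<pi>' \<gamma>'"
  shows "\<pi> = \<pi>' \<and> \<gamma> = \<gamma>'"
proof -
  have entry: "\<pi> j = \<pi>' j \<and> \<gamma> (\<pi> j) = \<gamma>' (\<pi>' j)" if "j \<in> {1..n}" for j
  proof -
    from that have p: "j - 1 < n" and j: "Suc (j - 1) = j" by auto
    from arg_cong[OF eq, of "\<lambda>u. u ! (j - 1)"] show ?thesis
      unfolding nth_Wact_mono[OF p] j by (simp only: prod.inject) auto
  qed
  have "\<pi> = \<pi>'"
  proof
    fix j show "\<pi> j = \<pi>' j"
      using entry permutes_not_in[OF \<pi>] permutes_not_in[OF \<pi>'] by (cases "j \<in> {1..n}") auto
  qed
  moreover have "\<gamma> i = \<gamma>' i" for i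
  proof (cases "i \<in> {1..n}")
    case True
    then obtain j where "j \<in> {1..n}" "\<pi> j = i"
      using permutes_image[OF \<pi>] by (metis imageE)
    with entry \<open>\<pi> = \<pi>'\<close> show ?thesis by metis
  next
    case False
    with \<gamma> \<gamma>' show ?thesis by blast
  qed
  ultimately show ?thesis by blast
qed

lemma finite_sign_choices: "finite {\<gamma>::nat \<Rightarrow> bool. \<forall>j. \<gamma> j \<longrightarrow> j \<in> A}" if "finite A"
proof (rule finite_subset)
  show "{\<gamma>::nat \<Rightarrow> bool. \<forall>j. \<gamma> j \<longrightarrow> j \<in> A} \<subseteq> (\<lambda>S j. j \<in> S) ` Pow A"
    by (auto intro!: image_eqI[of _ _ "Collect _"])
qed (use that in simp)

lemma Wsum_coeff_expansion:
  assumes "\<forall>u\<in>words h. \<exists>\<pi> \<gamma>. \<pi> permutes {1..n} \<and> (\<forall>j. \<gamma> j \<longrightarrow> j \<in> {1..n}) \<and>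
    u = Wact_mono n \<sigma> \<pi> \<gamma>"
  shows "h = Wsum n \<sigma> (\<lambda>\<pi> \<gamma>. coeff h (Wact_mono n \<sigma> \<pi> \<gamma>))"
proof -
  let ?W = "{\<pi>. \<pi> permutes {1..n}} \<times> {\<gamma>. \<forall>j. \<gamma> j \<longrightarrow> j \<in> {1..n}}"
  let ?word = "\<lambda>x. Wact_mono n \<sigma> (fst x) (snd x)"
  have "inj_on ?word ?W"
    using Wact_mono_inj[of _ n _ _ _ \<sigma>] by (intro inj_onI) (auto simp: prod_eq_iff)
  then have "Wsum n \<sigma> (\<lambda>\<pi> \<gamma>. coeff h (Wact_mono n \<sigma> \<pi> \<gamma>)) = (\<Sum>u\<in>?word ` ?W. monom u (coeff h u))"
    by (simp add: Wsum_def sum.cartesian_product sum.reindex ncmono_def split_beta)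
  also have "\<dots> = h"
  proof (rule monom_expansion_superset[symmetric])
    show "finite (?word ` ?W)"
      by (intro finite_imageI finite_cartesian_product finite_sign_choices) (auto simp: finite_permutations)
    show "words h \<subseteq> ?word ` ?W"
      using assms by force
  qed
  finally show ?thesis by simp
qed

lemma renamed_multilinear_word_eq_Wact_mono:
  assumes e: "bij_betw e {1..n} V"
    and w: "distinct (map var_of w)" "set (map var_of w) = V"
  shows "\<exists>\<pi> \<gamma>. \<pi> permutes {1..n} \<and> (\<forall>j. \<gamma> j \<longrightarrow> j \<in> {1..n}) \<and>
    map (\<lambda>l. (the_inv_into {1..n} e (var_of l), snd l)) w = Wact_mono n (\<lambda>j. snd (e j)) \<pi> \<gamma>"
proof (rule word_eq_Wact_mono)
  let ?idx = "the_inv_into {1..n} e"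
  have idx: "bij_betw ?idx V {1..n}"
    by (rule bij_betw_the_inv_into[OF e])
  have e_idx: "e (?idx x) = x" if "x \<in> V" for x
    using e that by (simp add: bij_betw_def f_the_inv_into_f)
  show "length (map (\<lambda>l. (?idx (var_of l), snd l)) w) = n"
    using distinct_card[OF w(1)] bij_betw_same_card[OF e] w(2) by simp
  have "map fst (map (\<lambda>l. (?idx (var_of l), snd l)) w) = map ?idx (map var_of w)"
    by simp
  then show "distinct (map fst (map (\<lambda>l. (?idx (var_of l), snd l)) w))"
    and "set (map fst (map (\<lambda>l. (?idx (var_of l), snd l)) w)) = {1..n}"
    using w idx by (simp_all only: distinct_map set_map bij_betw_def)
  show "\<forall>l'\<in>set (map (\<lambda>l. (?idx (var_of l), snd l)) w). fst (snd l') = snd (e (fst l'))"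
  proof
    fix l' assume "l' \<in> set (map (\<lambda>l. (?idx (var_of l), snd l)) w)"
    then obtain l where l: "l \<in> set w" "l' = (?idx (var_of l), snd l)" by auto
    with w(2) have "e (?idx (var_of l)) = var_of l" by (intro e_idx) auto
    with l show "fst (snd l') = snd (e (fst l'))"
      by (simp add: var_of_def)
  qed
qed

lemma distinct_var_of_multilinear:
  assumes "\<forall>v. count (multidegree w) v \<le> 1"
  shows "distinct (map var_of w)"
  unfolding distinct_count_atmost_1
proof
  fix x
  define c where "c = count (mset (map var_of w)) x"
  have "c \<le> 1"
    using assms by (simp only: c_def multidegree_def)
  moreover have "c = 0 \<longleftrightarrow> x \<notin> set (map var_of w)"
    unfolding c_def by (rule count_mset_0_iff)
  ultimately show "count (mset (map var_of w)) x = (if x \<in> set (map var_of w) then 1 else 0)"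
    unfolding c_def[symmetric] by auto
qed

lemma set_mset_multidegree: "set_mset (multidegree w) = var_of ` set w"
  by (simp add: multidegree_def)

lemma (in group) rename_multilinear_to_Wact_mono:
  assumes e: "bij_betw e {1..n} V" and e_ok: "\<forall>j\<in>{1..n}. 1 \<le> fst (e j)"
    and vars: "\<And>w. w \<in> words f \<Longrightarrow> distinct (map var_of w) \<and> set (map var_of w) = V"
  obtains r r' where "endo_data G (rename_vars r)" "endo_data G (rename_vars r')"
    and "\<forall>u\<in>words (psubst (rename_vars r) f). \<exists>\<pi> \<gamma>. \<pi> permutes {1..n} \<and>
      (\<forall>j. \<gamma> j \<longrightarrow> j \<in> {1..n}) \<and> u = Wact_mono n (\<lambda>j. snd (e j)) \<pi> \<gamma>"
    and "psubst (rename_vars r') (psubst (rename_vars r) f) = f"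
proof
  define idx where "idx x = (if x \<in> V then the_inv_into {1..n} e x else fst x)" for x
  define unidx :: "nat \<times> 'a \<Rightarrow> nat" where
    "unidx x = (if fst x \<in> {1..n} then fst (e (fst x)) else fst x)" for x
  have idx_range: "the_inv_into {1..n} e x \<in> {1..n}" "e (the_inv_into {1..n} e x) = x" if "x \<in> V" for x
    using bij_betw_apply[OF bij_betw_the_inv_into[OF e] that] f_the_inv_into_f_bij_betw[OF e] that
    by auto
  show "endo_data G (rename_vars idx)" "endo_data G (rename_vars unidx)"
    using idx_range(1) e_ok by (auto simp: idx_def unidx_def intro!: endo_data_rename_vars)
  show "\<forall>u\<in>words (psubst (rename_vars idx) f). \<exists>\<pi> \<gamma>. \<pi> permutes {1..n} \<and>
      (\<forall>j. \<gamma> j \<longrightarrow> j \<in> {1..n}) \<and> u = Wact_mono n (\<lambda>j. snd (e j)) \<pi> \<gamma>"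
  proof
    fix u assume "u \<in> words (psubst (rename_vars idx) f)"
    then obtain w where w: "w \<in> words f" and u: "u = map (\<lambda>l. (idx (var_of l), snd l)) w"
      using words_psubst_letterwise[OF lsubst_rename_vars, of idx f] by auto
    then have "u = map (\<lambda>l. (the_inv_into {1..n} e (var_of l), snd l)) w"
      using vars[OF w] by (auto simp: idx_def)
    then show "\<exists>\<pi> \<gamma>. \<pi> permutes {1..n} \<and> (\<forall>j. \<gamma> j \<longrightarrow> j \<in> {1..n}) \<and>
        u = Wact_mono n (\<lambda>j. snd (e j)) \<pi> \<gamma>"
      using renamed_multilinear_word_eq_Wact_mono[OF e] vars[OF w] by simp
  qed
  show "psubst (rename_vars unidx) (psubst (rename_vars idx) f) = f"
  proof (rule psubst_rename_vars_inverse)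
    fix w l assume "w \<in> words f" "l \<in> set w"
    then have "var_of l \<in> V" using vars by auto
    then show "unidx (idx (var_of l), fst (snd l)) = fst l"
      using idx_range[of "var_of l"] by (simp add: idx_def unidx_def var_of_def)
  qed
qed

context finite_group
begin

lemma graded_star_id_words_Nil:
  assumes "f \<in> graded_star_ids G" "words f \<subseteq> {[]}"
  shows "f = 0"
proof -
  have "peval G (\<lambda>_ _ _ _. 0) f \<one> \<one> = 0"
    using assms(1) by (auto simp: graded_star_ids_def graded_subst_def graded_comp_def)
  moreover have "peval G (\<lambda>_ _ _ _. 0) f \<one> \<one> = of_rat (coeff f [])"
    using assms(2) by (subst peval_superset[of "{[]}"]) (auto simp: mone_def)
  ultimately show ?thesis
    using assms(2) by (intro poly_mapping_eqI) (auto simp: in_keys_iff)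
qed

text \<open>Renaming the variables of a multilinear identity to \<open>x\<^sub>1,\<dots>,x\<^sub>n\<close> along an enumeration
  \<open>e\<close> gives an identity of the form \<open>Wsum n \<sigma> a\<close>; renaming back recovers \<open>f\<close>.\<close>

lemma multilinear_graded_star_id_mem:
  assumes I: "tstar_ideal G I"
    and Wsum_mem: "\<And>n \<sigma> a. 1 \<le> n \<Longrightarrow> \<forall>j\<in>{1..n}. \<sigma> j \<in> carrier G \<Longrightarrow>
      Wsum n \<sigma> a \<in> graded_star_ids G \<Longrightarrow> Wsum n \<sigma> a \<in> I"
    and f: "f \<in> graded_star_ids G" and deg: "\<forall>w\<in>words f. multidegree w = M"
    and multilinear: "\<forall>v. count M v \<le> 1"
  shows "f \<in> I"
proof (cases "words f \<subseteq> {[]}")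
  case True
  then show ?thesis using graded_star_id_words_Nil[OF f] I by (simp add: tstar_ideal_def)
next
  case False
  then obtain w0 where w0: "w0 \<in> words f" "w0 \<noteq> []" by blast
  define n where "n = card (set_mset M)"
  have vars: "distinct (map var_of w) \<and> set (map var_of w) = set_mset M" if "w \<in> words f" for w
  proof -
    have "multidegree w = M" using deg that by blast
    then show ?thesis
      using multilinear distinct_var_of_multilinear[of w] set_mset_multidegree[of w] by auto
  qed
  then have "n \<noteq> 0"
    using w0 by (auto simp: n_def)
  obtain e where e: "bij_betw e {1..n} (set_mset M)"
    using ex_bij_betw_nat_finite_1 by (auto simp: n_def)
  have letters: "letter_ok G l" if "l \<in> set w0" for l
    using f w0(1) that by (auto simp: graded_star_ids_def FA_iff)
  have e_ok: "1 \<le> fst (e j) \<and> snd (e j) \<in> carrier G" if j: "j \<in> {1..n}" for j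
  proof -
    have "e j \<in> set (map var_of w0)"
      using bij_betw_apply[OF e j] vars[OF w0(1)] by simp
    then obtain l where "l \<in> set w0" "e j = var_of l" by auto
    with letters show ?thesis by (simp add: letter_ok_def var_of_def)
  qed
  obtain r r' where endo: "endo_data G (rename_vars r)" "endo_data G (rename_vars r')"
    and words: "\<forall>u\<in>words (psubst (rename_vars r) f). \<exists>\<pi> \<gamma>. \<pi> permutes {1..n} \<and>
      (\<forall>j. \<gamma> j \<longrightarrow> j \<in> {1..n}) \<and> u = Wact_mono n (\<lambda>j. snd (e j)) \<pi> \<gamma>"
    and renamed_back: "psubst (rename_vars r') (psubst (rename_vars r) f) = f"
    using rename_multilinear_to_Wact_mono[OF e _ vars] e_ok by blast
  define f' where "f' = psubst (rename_vars r) f"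
  have "f' \<in> graded_star_ids G"
    using tstar_ideal_graded_star_ids f endo(1) by (simp add: f'_def tstar_ideal_def)
  moreover have "f' = Wsum n (\<lambda>j. snd (e j)) (\<lambda>\<pi> \<gamma>. coeff f' (Wact_mono n (\<lambda>j. snd (e j)) \<pi> \<gamma>))"
    using words unfolding f'_def by (rule Wsum_coeff_expansion)
  moreover have "1 \<le> n" using \<open>n \<noteq> 0\<close> by simp
  ultimately have "f' \<in> I"
    using Wsum_mem e_ok by metis
  then have "psubst (rename_vars r') f' \<in> I"
    using I endo(2) by (simp add: tstar_ideal_def)
  then show ?thesis
    using renamed_back by (simp add: f'_def)
qed

end

section \<open>Reduction to the multilinear case\<close>

lemma card_set_mset_le_size: "card (set_mset M) \<le> size M"
  by (induction M) (auto simp: card_insert_if)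

lemma replace_repeated_element:
  assumes "2 \<le> count M v" "y \<notin># M"
  shows "size (add_mset y (M - {#v#})) = size M"
    and "card (set_mset (add_mset y (M - {#v#}))) = Suc (card (set_mset M))"
proof -
  have "v \<in># M" using assms(1) by (simp flip: count_greater_zero_iff)
  then show "size (add_mset y (M - {#v#})) = size M"
    by (simp add: size_Suc_Diff1)
  have "set_mset (M - {#v#}) = set_mset M"
  proof
    show "set_mset (M - {#v#}) \<subseteq> set_mset M" by (rule set_mset_mono) simp
    show "set_mset M \<subseteq> set_mset (M - {#v#})" using assms(1) by (auto simp: in_diff_count)
  qed
  with assms(2) show "card (set_mset (add_mset y (M - {#v#}))) = Suc (card (set_mset M))"
    by simp
qed

lemma exists_fresh_index: "\<exists>y. 1 \<le> y \<and> (\<forall>w\<in>words f. \<forall>l\<in>set w. fst l < y)"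
proof (intro exI conjI ballI)
  let ?y = "Suc (Max (insert 0 (fst ` (\<Union>w\<in>words f. set w))))"
  show "1 \<le> ?y" by simp
  fix w l assume "w \<in> words f" "l \<in> set w"
  then show "fst l < ?y" by (auto intro!: le_imp_less_Suc Max_ge)
qed

lemma (in group) reduce_repeated_variable:
  assumes f: "f \<in> FA G" "f \<noteq> 0" and deg: "\<forall>w\<in>words f. multidegree w = M"
    and v: "2 \<le> count M v"
  obtains F M' where "\<forall>u\<in>words F. multidegree u = M'"
    and "size M' = size M" and "card (set_mset M') = Suc (card (set_mset M))"
    and "\<And>C. tstar_ideal G C \<Longrightarrow> F \<in> C \<longleftrightarrow> f \<in> C"
proof -
  obtain w0 where w0: "w0 \<in> words f" using f(2) by fastforce
  have "occurrences v w0 \<noteq> 0"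
    using v deg w0 by (simp flip: count_multidegree)
  then obtain l0 where l0: "l0 \<in> set w0" "var_of l0 = v"
    by (auto simp: occurrences_eq_0_iff)
  have "letter_ok G l0" using f(1) w0 l0(1) by (auto simp: FA_iff)
  then have v_ok: "1 \<le> fst v" using l0(2) by (auto simp: letter_ok_def var_of_def)
  obtain y where y: "1 \<le> y" "\<forall>w\<in>words f. \<forall>l\<in>set w. fst l < y"
    using exists_fresh_index by blast
  have fresh: "\<forall>w\<in>words f. \<forall>l\<in>set w. var_of l \<noteq> (y, snd v)"
    using y(2) by (force simp: var_of_def)
  have "v \<noteq> (y, snd v)"
    using y(2) w0 l0 by (force simp: var_of_def)
  have "(y, snd v) \<notin> var_of ` set w0"
    using fresh w0 by (metis imageE)
  then have "occurrences (y, snd v) w0 = 0"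
    by (simp add: occurrences_eq_0_iff)
  then have "count M (y, snd v) = 0"
    using deg w0 count_multidegree[of w0] by auto
  then have "(y, snd v) \<notin># M"
    by (simp add: count_eq_zero_iff)
  define F where "F = (\<Sum>w\<in>words f. smult (coeff f w) (replace_once v y w))"
  show ?thesis
  proof (rule that)
    show "\<forall>u\<in>words F. multidegree u = add_mset (y, snd v) (M - {#v#})"
      unfolding F_def using deg \<open>v \<noteq> (y, snd v)\<close> by (rule multidegree_sum_replace_once)
    show "size (add_mset (y, snd v) (M - {#v#})) = size M"
      and "card (set_mset (add_mset (y, snd v) (M - {#v#}))) = Suc (card (set_mset M))"
      using replace_repeated_element[OF v \<open>(y, snd v) \<notin># M\<close>] by simp_all
    show "F \<in> C \<longleftrightarrow> f \<in> C" if "tstar_ideal G C" for C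
      unfolding F_def
    proof (rule tstar_ideal_replace_once_iff[OF that v_ok y(1) fresh])
      show "\<forall>w\<in>words f. occurrences v w = count M v"
        using deg by (simp flip: count_multidegree)
    qed (use v in simp)
  qed
qed

context finite_group
begin

lemma multihomogeneous_graded_star_id_mem:
  assumes I: "tstar_ideal G I"
    and Wsum_mem: "\<And>n \<sigma> a. 1 \<le> n \<Longrightarrow> \<forall>j\<in>{1..n}. \<sigma> j \<in> carrier G \<Longrightarrow>
      Wsum n \<sigma> a \<in> graded_star_ids G \<Longrightarrow> Wsum n \<sigma> a \<in> I"
  shows "f \<in> graded_star_ids G \<Longrightarrow> \<forall>w\<in>words f. multidegree w = M \<Longrightarrow> f \<in> I"
proof (induction "size M - card (set_mset M)" arbitrary: f M rule: less_induct)
  case less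
  show ?case
  proof (cases "f = 0 \<or> (\<forall>v. count M v \<le> 1)")
    case True
    then show ?thesis
      using I multilinear_graded_star_id_mem[OF I Wsum_mem less.prems] by (auto simp: tstar_ideal_def)
  next
    case False
    then obtain v where "f \<noteq> 0" "\<not> count M v \<le> 1"
      by auto
    then have "f \<noteq> 0" "2 \<le> count M v"
      by simp_all
    moreover have "f \<in> FA G"
      using less.prems(1) by (simp add: graded_star_ids_def)
    ultimately obtain F M' where F: "\<forall>u\<in>words F. multidegree u = M'"
      and "size M' = size M" "card (set_mset M') = Suc (card (set_mset M))"
      and same_ideals: "\<And>C. tstar_ideal G C \<Longrightarrow> F \<in> C \<longleftrightarrow> f \<in> C"
      using reduce_repeated_variable less.prems(2) by metis
    then have "size M' - card (set_mset M') < size M - card (set_mset M)"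
      using card_set_mset_le_size[of M'] by simp
    moreover have "F \<in> graded_star_ids G"
      using same_ideals[OF tstar_ideal_graded_star_ids] less.prems(1) by simp
    ultimately have "F \<in> I"
      using less.hyps F by blast
    then show ?thesis using same_ideals[OF I] by simp
  qed
qed

theorem graded_star_ids_eq_tstar_hull:
  "graded_star_ids G = tstar_hull G {f \<in> graded_star_ids G. \<exists>n \<sigma> a. 1 \<le> n \<and>
      (\<forall>j\<in>{1..n}. \<sigma> j \<in> carrier G) \<and> f = Wsum n \<sigma> a}"
    (is "_ = tstar_hull G ?S")
proof
  show "tstar_hull G ?S \<subseteq> graded_star_ids G"
    unfolding tstar_hull_def using tstar_ideal_graded_star_ids by (intro Inter_lower) auto
  show "graded_star_ids G \<subseteq> tstar_hull G ?S"
    unfolding tstar_hull_def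
  proof (intro subsetI InterI, elim CollectE conjE)
    fix f I assume f: "f \<in> graded_star_ids G" and I: "tstar_ideal G I" and "?S \<subseteq> I"
    then have Wsum_mem: "\<And>n \<sigma> a. 1 \<le> n \<Longrightarrow> \<forall>j\<in>{1..n}. \<sigma> j \<in> carrier G \<Longrightarrow>
        Wsum n \<sigma> a \<in> graded_star_ids G \<Longrightarrow> Wsum n \<sigma> a \<in> I"
      by blast
    have "restrict_words (\<lambda>w. multidegree w = M) f \<in> I" for M
    proof (rule multihomogeneous_graded_star_id_mem[OF I Wsum_mem])
      show "restrict_words (\<lambda>w. multidegree w = M) f \<in> graded_star_ids G"
        by (rule tstar_ideal_multihomogeneous_component[OF tstar_ideal_graded_star_ids f])
      show "\<forall>w\<in>words (restrict_words (\<lambda>w. multidegree w = M) f). multidegree w = M"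
        by (simp add: words_restrict_words)
    qed
    then have "(\<Sum>M\<in>multidegree ` words f. restrict_words (\<lambda>w. multidegree w = M) f) \<in> I"
      by (intro rat_subspace_sum[OF tstar_ideal_rat_subspace[OF I]])
    then show "f \<in> I"
      by (simp flip: sum_multihomogeneous_components)
  qed
qed

end

theorem mainTheorem1:
  fixes G :: "('g, 'm) monoid_scheme"
  assumes "group G" and "finite (carrier G)"
  shows "graded_star_ids G =
           tstar_hull G {f \<in> graded_star_ids G. \<exists>n \<sigma> a. 1 \<le> n \<and>
              (\<forall>j\<in>{1..n}. \<sigma> j \<in> carrier G) \<and> f = Wsum n \<sigma> a}"
proof -
  interpret finite_group G
    using assms by (intro finite_group.intro finite_group_axioms.intro)
  show ?thesis by (rule graded_star_ids_eq_tstar_hull)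
qed

end
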